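(* Let $\alpha\in[0,1)$, let $r>1/2$, and let $$X(\sqrt{t},\alpha)=\{\sqrt{n}\,e^{2\pi i n\alpha}\ :\ n\in\mathbb{N}\}\subset\mathbb{C}.$$ Consider, for a real number $m$ and $\beta\in[0,1)$, the system $$m-3r\sqrt{m}\le n\le m+3r\sqrt{m},\qquad \|n\alpha-\beta\|\le \frac{r}{2\sqrt{m}}\qquad (\ast)$$ in the unknown $n\in\mathbb{N}$. If $X(\sqrt{t},\alpha)$ is $r$-relatively dense, then for every real $m\ge16r^2$ and every $\beta\in[0,1)$ the system $(\ast)$ has a solution $n\in\mathbb{N}$. Conversely, if $(\ast)$ has a solution $n\in\mathbb{N}$ for every real $m\ge16r^2$ and every $\beta\in[0,1)$, then $X(\sqrt{t},\alpha)$ is $6r$-relatively dense.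
   Context: $\|x\|=\min_{i\in\mathbb{Z}}|x-i|$ denotes the distance from $x$ to the nearest integer. $B(x,r)$ denotes the open disk in $\mathbb{C}$ of radius $r$ centered at $x$. A set $X\subset\mathbb{C}$ is $r$-relatively dense if $B(x,r)\cap X\neq\emptyset$ for every $x\in\mathbb{C}$. *)

theory Defs
  imports "HOL-Analysis.Analysis"
begin

definition dist_int :: "real \<Rightarrow> real" where
  "dist_int x = (INF i::int. \<bar>x - of_int i\<bar>)"

definition rel_dense :: "real \<Rightarrow> complex set \<Rightarrow> bool" where
  "rel_dense r X \<longleftrightarrow> (\<forall>x. ball x r \<inter> X \<noteq> {})"

definition Xsqrt :: "real \<Rightarrow> complex set" where
  "Xsqrt \<alpha> = {complex_of_real (sqrt (real n)) * exp (2 * pi * \<i> * of_real (real n * \<alpha>)) | n::nat. n \<ge> 1}"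

definition sys :: "real \<Rightarrow> real \<Rightarrow> real \<Rightarrow> real \<Rightarrow> nat \<Rightarrow> bool" where
  "sys \<alpha> r m \<beta> n \<longleftrightarrow>
     m - 3 * r * sqrt m \<le> real n \<and> real n \<le> m + 3 * r * sqrt m \<and>
     dist_int (real n * \<alpha> - \<beta>) \<le> r / (2 * sqrt m)"

end

theory Submission
  imports Defs
begin

(* Write points in polar form rcis \<rho> (2 pi \<theta>). For \<rho>, \<rho>' \<ge> 0 the distance between
   rcis \<rho> (2 pi \<theta>) and rcis \<rho>' (2 pi \<theta>') is, up to constant factors,
   |\<rho> - \<rho>'| + \<rho> ||\<theta> - \<theta>'||; the lower bound on the angular part is Jordan's
   inequality sin t \<ge> 2t/pi. With \<rho> = sqrt m \<ge> 4r and \<rho>' = sqrt n, a radial error of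
   order r corresponds to |n - m| of order r sqrt m, and an angular error of order r to
   ||n \<alpha> - \<beta>|| of order r / sqrt m: this is the system. In the converse direction a point
   of modulus below 4r is approximated using m = 16 r^2, whose solutions give points of
   modulus in [2r, 6r). *)

lemma dist_int_eq_abs_round: "dist_int x = \<bar>x - of_int (round x)\<bar>"
proof -
  have "bdd_below (range (\<lambda>i::int. \<bar>x - of_int i\<bar>))"
    by (auto intro: bdd_belowI[of _ 0])
  then show ?thesis
    unfolding dist_int_def
    by (intro antisym cINF_lower cINF_greatest) (auto simp: round_diff_minimal)
qed

lemma dist_int_le_half: "dist_int x \<le> 1/2"
  using of_int_round_abs_le[of x] by (simp add: dist_int_eq_abs_round abs_minus_commute)

lemma sin_ge_Jordan:
  assumes "0 \<le> t" "t \<le> pi/2"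
  shows "2 / pi * t \<le> sin t"
proof -
  have "convex_on {0..pi/2} (\<lambda>x. - sin x)"
    by (rule convex_on_realI[where f' = "\<lambda>x. - cos x"])
       (auto intro!: derivative_eq_intros cos_monotone_0_pi_le)
  from convex_onD[OF this, of "2 / pi * t" 0 "pi/2"]
  have "- sin (2 / pi * t * (pi/2)) \<le> - (2 / pi * t)"
    using assms pi_gt_zero by (simp add: field_simps)
  then show ?thesis by simp
qed

lemma cis_turn_add_int: "cis (2 * pi * (x + of_int k)) = cis (2 * pi * x)"
  by (simp add: distrib_left cis_mult[symmetric])

lemma norm_cis_turn_sub_one: "norm (cis (2 * pi * x) - 1) = 2 * sin (pi * dist_int x)"
proof -
  define y where "y = x - of_int (round x)"
  have "norm (cis (2 * pi * x) - 1) = norm (cis (2 * pi * y) - 1)"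
    using cis_turn_add_int[of y "round x"] by (simp add: y_def)
  also have "\<dots> = 2 * \<bar>sin (2 * pi * y / 2)\<bar>"
    unfolding cis_conv_exp by (rule dist_exp_i_1)
  also have "\<bar>sin (2 * pi * y / 2)\<bar> = \<bar>sin (pi * \<bar>y\<bar>)\<bar>"
    by (cases "0 \<le> y") simp_all
  also have "\<dots> = sin (pi * \<bar>y\<bar>)"
    using dist_int_le_half[of x] by (intro abs_of_nonneg sin_ge_zero)
      (auto simp: dist_int_eq_abs_round y_def mult_left_le)
  finally show ?thesis
    by (simp add: dist_int_eq_abs_round y_def)
qed

lemma norm_cis_diff: "norm (cis x - cis y) = norm (cis (x - y) - 1)"
proof -
  have "cis x - cis y = cis y * (cis (x - y) - 1)"
    by (simp add: right_diff_distrib cis_mult)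
  then show ?thesis by (simp add: norm_mult)
qed

lemma norm_cis_turn_diff:
  "norm (cis (2 * pi * u) - cis (2 * pi * v)) = 2 * sin (pi * dist_int (u - v))"
  by (simp add: norm_cis_diff norm_cis_turn_sub_one flip: right_diff_distrib)

lemma norm_cis_turn_diff_le:
  "norm (cis (2 * pi * u) - cis (2 * pi * v)) \<le> 2 * pi * dist_int (u - v)"
  using sin_x_le_x[of "pi * dist_int (u - v)"]
  by (simp add: norm_cis_turn_diff dist_int_eq_abs_round)

lemma norm_cis_turn_diff_ge:
  "4 * dist_int (u - v) \<le> norm (cis (2 * pi * u) - cis (2 * pi * v))"
  using sin_ge_Jordan[of "pi * dist_int (u - v)"] dist_int_le_half[of "u - v"]
  by (simp add: norm_cis_turn_diff dist_int_eq_abs_round)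

lemma abs_square_diff:
  fixes a b :: real
  assumes "0 \<le> a" "0 \<le> b"
  shows "\<bar>a\<^sup>2 - b\<^sup>2\<bar> = \<bar>a - b\<bar> * (a + b)"
proof -
  have "a\<^sup>2 - b\<^sup>2 = (a - b) * (a + b)"
    by (simp add: power2_eq_square algebra_simps)
  then show ?thesis
    using assms by (simp add: abs_mult)
qed

lemma abs_diff_le_norm_rcis_diff:
  assumes "0 \<le> a" "0 \<le> b"
  shows "\<bar>a - b\<bar> \<le> norm (rcis a x - rcis b y)"
  using norm_triangle_ineq3[of "rcis a x" "rcis b y"] assms by simp

lemma norm_rcis_diff_le:
  assumes "0 \<le> a"
  shows "norm (rcis a x - rcis b y) \<le> a * norm (cis x - cis y) + \<bar>a - b\<bar>"
proof -
  have "rcis a x - rcis b y = of_real a * (cis x - cis y) + of_real (a - b) * cis y"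
    by (simp add: rcis_def algebra_simps)
  then have "norm (rcis a x - rcis b y) \<le> norm (of_real a * (cis x - cis y)) + norm (of_real (a - b) * cis y)"
    by (metis norm_triangle_ineq)
  then show ?thesis
    using assms by (simp add: norm_mult del: of_real_diff)
qed

lemma norm_cis_diff_le_norm_rcis_diff:
  assumes "0 \<le> a" "0 \<le> b"
  shows "b * norm (cis x - cis y) \<le> 2 * norm (rcis a x - rcis b y)"
proof -
  have "b * norm (cis x - cis y) = norm (rcis b x - rcis b y)"
    using assms by (simp add: rcis_def norm_mult flip: right_diff_distrib)
  also have "\<dots> \<le> norm (rcis b x - rcis a x) + norm (rcis a x - rcis b y)"
    using dist_triangle[of "rcis b x" "rcis b y" "rcis a x"] by (simp add: dist_norm)
  also have "norm (rcis b x - rcis a x) = \<bar>a - b\<bar>"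
    by (simp add: rcis_def norm_mult abs_minus_commute flip: left_diff_distrib of_real_diff)
  finally show ?thesis
    using abs_diff_le_norm_rcis_diff[OF assms, of x y] by linarith
qed

lemma abs_square_diff_le:
  fixes a b r :: real
  assumes "0 \<le> a" "r \<le> b" "\<bar>a - b\<bar> \<le> r"
  shows "\<bar>a\<^sup>2 - b\<^sup>2\<bar> \<le> 3 * r * b"
proof -
  have "0 \<le> r" "0 \<le> b" using assms by linarith+
  have "\<bar>a\<^sup>2 - b\<^sup>2\<bar> = \<bar>a - b\<bar> * (a + b)"
    using assms(1) \<open>0 \<le> b\<close> by (rule abs_square_diff)
  also have "\<dots> \<le> r * (2 * b + r)"
    using assms \<open>0 \<le> r\<close> by (intro mult_mono) auto
  also have "r * r \<le> r * b"
    using assms \<open>0 \<le> r\<close> by (intro mult_left_mono)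
  then have "r * (2 * b + r) \<le> 3 * r * b"
    by (simp add: algebra_simps)
  finally show ?thesis .
qed

lemma abs_diff_le_of_abs_square_diff_le:
  fixes a b r :: real
  assumes "0 \<le> a" "0 < r" "4 * r \<le> b" "\<bar>a\<^sup>2 - b\<^sup>2\<bar> \<le> 3 * r * b"
  shows "\<bar>a - b\<bar> \<le> 2 * r"
proof -
  have "0 < b" using assms by linarith
  have "3 * r * b \<le> 3/4 * b\<^sup>2"
    using assms \<open>0 < b\<close> by (simp add: power2_eq_square)
  then have "b\<^sup>2 / 4 \<le> a\<^sup>2"
    using assms(4) unfolding abs_le_iff by linarith
  then have "(b / 2)\<^sup>2 \<le> a\<^sup>2"
    by (simp add: power_divide)
  then have "b / 2 \<le> a"
    using assms(1) by (rule power2_le_imp_le)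
  then have "\<bar>a - b\<bar> * (3/2 * b) \<le> \<bar>a - b\<bar> * (a + b)"
    by (intro mult_left_mono) auto
  also have "\<dots> = \<bar>a\<^sup>2 - b\<^sup>2\<bar>"
    using assms(1) \<open>0 < b\<close> by (simp add: abs_square_diff)
  also have "\<dots> \<le> 2 * r * (3/2 * b)"
    using assms(4) by (simp add: algebra_simps)
  finally show ?thesis
    using \<open>0 < b\<close> by simp
qed

lemma Xsqrt_eq_rcis:
  "Xsqrt \<alpha> = {rcis (sqrt (real n)) (2 * pi * (real n * \<alpha>)) | n::nat. n \<ge> 1}"
  unfolding Xsqrt_def rcis_def cis_conv_exp by (simp add: algebra_simps)

lemma rcis_turn_polar:
  obtains \<beta> where "0 \<le> \<beta>" "\<beta> < 1" "z = rcis (cmod z) (2 * pi * \<beta>)"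
proof (rule that[of "Arg2pi z / (2 * pi)"])
  show "0 \<le> Arg2pi z / (2 * pi)" "Arg2pi z / (2 * pi) < 1"
    using Arg2pi_ge_0[of z] Arg2pi_lt_2pi[of z] by simp_all
  show "z = rcis (cmod z) (2 * pi * (Arg2pi z / (2 * pi)))"
    using Arg2pi_eq[of z] by (simp add: rcis_def cis_conv_exp)
qed

lemma sys_iff_sqrt:
  assumes "0 \<le> m"
  shows "sys \<alpha> r m \<beta> n \<longleftrightarrow>
    \<bar>(sqrt (real n))\<^sup>2 - (sqrt m)\<^sup>2\<bar> \<le> 3 * r * sqrt m \<and>
    dist_int (real n * \<alpha> - \<beta>) \<le> r / (2 * sqrt m)"
  using assms by (auto simp: sys_def abs_le_iff)

lemma sys_solvable_if_rel_dense:
  assumes "0 < r" "rel_dense r (Xsqrt \<alpha>)" "16 * r\<^sup>2 \<le> m"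
  shows "\<exists>n. n \<ge> 1 \<and> sys \<alpha> r m \<beta> n"
proof -
  define b where "b = sqrt m"
  have "0 \<le> m" using assms(3) by (smt (verit) zero_le_power2)
  have "4 * r \<le> b"
    unfolding b_def using assms(3) by (intro real_le_rsqrt) (simp add: power_mult_distrib)
  from assms(2) have "ball (rcis b (2 * pi * \<beta>)) r \<inter> Xsqrt \<alpha> \<noteq> {}"
    unfolding rel_dense_def by blast
  then obtain w where "w \<in> Xsqrt \<alpha>" and "dist (rcis b (2 * pi * \<beta>)) w < r"
    by auto
  then obtain n :: nat where "n \<ge> 1" and
      close: "norm (rcis (sqrt n) (2 * pi * (n * \<alpha>)) - rcis b (2 * pi * \<beta>)) < r"
    by (auto simp: Xsqrt_eq_rcis dist_norm norm_minus_commute)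
  define a where "a = sqrt n"
  have "0 < b"
    using \<open>4 * r \<le> b\<close> assms(1) by linarith
  have "\<bar>a - b\<bar> \<le> r"
    using abs_diff_le_norm_rcis_diff[of a b "2 * pi * (n * \<alpha>)" "2 * pi * \<beta>"] close \<open>0 < b\<close>
    unfolding a_def by simp
  then have squares: "\<bar>a\<^sup>2 - b\<^sup>2\<bar> \<le> 3 * r * b"
    using \<open>4 * r \<le> b\<close> assms(1) by (intro abs_square_diff_le) (auto simp: a_def)
  have "b * (4 * dist_int (n * \<alpha> - \<beta>)) \<le> b * norm (cis (2 * pi * (n * \<alpha>)) - cis (2 * pi * \<beta>))"
    using \<open>4 * r \<le> b\<close> assms(1) norm_cis_turn_diff_ge by (intro mult_left_mono) auto
  also have "\<dots> \<le> 2 * norm (rcis a (2 * pi * (n * \<alpha>)) - rcis b (2 * pi * \<beta>))"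
    using \<open>0 < b\<close> by (intro norm_cis_diff_le_norm_rcis_diff) (simp_all add: a_def)
  also have "\<dots> < 2 * r"
    using close by (simp add: a_def)
  finally have "dist_int (n * \<alpha> - \<beta>) \<le> r / (2 * b)"
    using \<open>4 * r \<le> b\<close> assms(1) by (simp add: field_simps)
  with squares \<open>n \<ge> 1\<close> show ?thesis
    using sys_iff_sqrt[OF \<open>0 \<le> m\<close>] unfolding a_def b_def by blast
qed

lemma polar_error_lt_six:
  fixes a c r s :: real
  defines "b \<equiv> max s (4 * r)"
  assumes "0 < r" "0 \<le> a" "0 \<le> s"
    and squares: "\<bar>a\<^sup>2 - b\<^sup>2\<bar> \<le> 3 * r * b"
    and angle: "b * c \<le> pi * r"
  shows "s * c + \<bar>s - a\<bar> < 6 * r"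
proof -
  have near: "\<bar>a - b\<bar> \<le> 2 * r"
    using squares assms(2,3) by (intro abs_diff_le_of_abs_square_diff_le) (auto simp: b_def)
  show ?thesis
  proof (cases "4 * r \<le> s")
    case True
    then have "b = s" by (simp add: b_def)
    then have "s * c \<le> pi * r" "\<bar>s - a\<bar> \<le> 2 * r"
      using angle near by (simp_all add: abs_minus_commute)
    moreover have "pi * r < 4 * r"
      using assms(2) pi_less_4 by simp
    ultimately show ?thesis by linarith
  next
    case False
    then have "b = 4 * r" by (simp add: b_def)
    then have "r * (4 * c) \<le> r * pi"
      using angle by (simp add: algebra_simps)
    then have "4 * c \<le> pi"
      using assms(2) by simp
    then have "s * c \<le> s"
      using \<open>0 \<le> s\<close> pi_less_4 by (simp add: mult_left_le)
    have "a\<^sup>2 \<le> 28 * r\<^sup>2"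
      using squares \<open>b = 4 * r\<close> by (simp add: power2_eq_square abs_le_iff)
    also have "\<dots> < (6 * r)\<^sup>2"
      using assms(2) by (simp add: power_mult_distrib)
    finally have "a < 6 * r"
      using assms(2) by (intro power_less_imp_less_base[of a 2]) auto
    moreover have "2 * r \<le> a"
      using near unfolding \<open>b = 4 * r\<close> abs_le_iff by linarith
    ultimately have "\<bar>s - a\<bar> < 6 * r - s"
      using False unfolding abs_less_iff by linarith
    then show ?thesis
      using \<open>s * c \<le> s\<close> by linarith
  qed
qed

lemma rel_dense_if_sys_solvable:
  assumes "0 < r"
    and solvable: "\<And>m \<beta>. 16 * r\<^sup>2 \<le> m \<Longrightarrow> 0 \<le> \<beta> \<Longrightarrow> \<beta> < 1 \<Longrightarrow> \<exists>n. n \<ge> 1 \<and> sys \<alpha> r m \<beta> n"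
  shows "rel_dense (6 * r) (Xsqrt \<alpha>)"
  unfolding rel_dense_def
proof
  fix z
  define s where "s = cmod z"
  obtain \<beta> where "0 \<le> \<beta>" "\<beta> < 1" and z: "z = rcis s (2 * pi * \<beta>)"
    unfolding s_def by (rule rcis_turn_polar)
  define b where "b = max s (4 * r)"
  have "0 \<le> s" "0 < b" "4 * r \<le> b" using assms(1) by (auto simp: s_def b_def)
  have "16 * r\<^sup>2 \<le> b\<^sup>2"
    using power_mono[OF \<open>4 * r \<le> b\<close>, of 2] assms(1) by (simp add: power_mult_distrib)
  then obtain n :: nat where "n \<ge> 1" and "sys \<alpha> r (b\<^sup>2) \<beta> n"
    using solvable \<open>0 \<le> \<beta>\<close> \<open>\<beta> < 1\<close> by blast
  define a where "a = sqrt n"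
  have squares: "\<bar>a\<^sup>2 - b\<^sup>2\<bar> \<le> 3 * r * b" and "dist_int (n * \<alpha> - \<beta>) \<le> r / (2 * b)"
    using \<open>sys \<alpha> r (b\<^sup>2) \<beta> n\<close> \<open>0 < b\<close> by (simp_all add: sys_iff_sqrt a_def)
  define c where "c = norm (cis (2 * pi * \<beta>) - cis (2 * pi * (n * \<alpha>)))"
  have "c \<le> 2 * pi * dist_int (n * \<alpha> - \<beta>)"
    using norm_cis_turn_diff_le[of "n * \<alpha>" \<beta>] unfolding c_def by (simp add: norm_minus_commute)
  also have "\<dots> \<le> 2 * pi * (r / (2 * b))"
    using \<open>dist_int (n * \<alpha> - \<beta>) \<le> r / (2 * b)\<close> by (intro mult_left_mono) auto
  finally have angle: "b * c \<le> pi * r"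
    using \<open>0 < b\<close> by (simp add: field_simps)
  define w where "w = rcis a (2 * pi * (n * \<alpha>))"
  have "w \<in> Xsqrt \<alpha>"
    unfolding Xsqrt_eq_rcis w_def a_def using \<open>n \<ge> 1\<close> by blast
  have "dist z w \<le> s * c + \<bar>s - a\<bar>"
    unfolding z w_def c_def dist_norm using \<open>0 \<le> s\<close> by (rule norm_rcis_diff_le)
  also have "\<dots> < 6 * r"
    using polar_error_lt_six[of r a s c] assms(1) \<open>0 \<le> s\<close> squares angle
    unfolding a_def b_def by simp
  finally show "ball z (6 * r) \<inter> Xsqrt \<alpha> \<noteq> {}"
    using \<open>w \<in> Xsqrt \<alpha>\<close> by auto
qed

theorem lemma6:
  fixes \<alpha> r :: real
  assumes "0 \<le> \<alpha>" "\<alpha> < 1" "r > 1/2"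
  shows "(rel_dense r (Xsqrt \<alpha>) \<longrightarrow>
            (\<forall>m::real. m \<ge> 16 * r^2 \<longrightarrow> (\<forall>\<beta>::real. 0 \<le> \<beta> \<and> \<beta> < 1 \<longrightarrow>
               (\<exists>n::nat. n \<ge> 1 \<and> sys \<alpha> r m \<beta> n))))
       \<and> ((\<forall>m::real. m \<ge> 16 * r^2 \<longrightarrow> (\<forall>\<beta>::real. 0 \<le> \<beta> \<and> \<beta> < 1 \<longrightarrow>
               (\<exists>n::nat. n \<ge> 1 \<and> sys \<alpha> r m \<beta> n)))
            \<longrightarrow> rel_dense (6 * r) (Xsqrt \<alpha>))"
proof -
  have "0 < r" using assms(3) by simp
  then show ?thesis
    using sys_solvable_if_rel_dense rel_dense_if_sys_solvable by blast
qed

end
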